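(* Let $V:\mathbb{C}^7\to\mathbb{C}^3\otimes\mathbb{C}^3$ be any isometry whose range is the orthogonal complement of $\operatorname{span}\{\ket{\phi_3^+},\ket{0}\otimes\ket{1}\}$, where $\ket{\phi_3^+}=\frac1{\sqrt3}\sum_{k=0}^2\ket{k}\otimes\ket{k}$, and let $\mathcal{N}_7^V:\mathcal{L}(\mathbb{C}^7)\to\mathcal{L}(\mathbb{C}^3)$ be $\mathcal{N}_7^V(\rho)=\operatorname{Tr}_E(V\rho V^\dagger)$ (trace over the second tensor factor). Then for every $p\in[0,1]$, $M_7(p)\in\mathcal{P}^{7\to7}_{\min}(\mathcal{N}_7^V,V)$, and for every $p\in(0,1]$ and every $\tilde d\le 6$, $M_7(p)\notin\mathcal{P}^{7\to7}(\mathcal{Q}_{\tilde d})$. Consequently $\mathcal{P}^{7\to 7}_{\min}(\mathcal{N}_7^V,V)\not\subseteq\mathcal{P}^{7\to7}(\mathcal{Q}_{\tilde d})$ for all $\tilde d<7$, i.e. minimal environment assistance optimally unlocks the encoding strength of $\mathcal{N}_7^V$.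
   Context: $M_7(p)=\mathbb{I}_5\oplus\begin{pmatrix}p&1-p\\ p/3&1-p/3\end{pmatrix}$ (a $7\times7$ block-diagonal row-stochastic matrix). $\mathcal{P}^{n\to m}(\mathcal{Q}_d)$ is the set of $n\times m$ matrices $P_{ij}=\operatorname{Tr}[\Lambda_j\rho_i]$ with $\rho_i$ density matrices on $\mathbb{C}^d$ and $\{\Lambda_j\}_{j=1}^m$ a POVM on $\mathbb{C}^d$. For a channel $\mathcal{N}$ with isometry $V:\mathbb{C}^{d_A}\to\mathbb{C}^{d_B}\otimes\mathbb{C}^{d_E}$ (first factor receiver $B$, second environment $E$), $\mathcal{N}(\rho)=\operatorname{Tr}_E(V\rho V^\dagger)$, the set $\mathcal{P}^{n\to m}_{\min}(\mathcal{N},V)$ (minimal environment assistance) consists of the $n\times m$ matrices $P_{ij}=\sum_{l,k}q(j\mid l,k)\operatorname{Tr}[(\Lambda^B_l\otimes\Lambda^E_k)V\rho_iV^\dagger]$, where $\rho_i$ are density matrices on $\mathbb{C}^{d_A}$, $\{\Lambda^B_l\}$ and $\{\Lambda^E_k\}$ are finite-outcome POVMs on $\mathbb{C}^{d_B}$ and $\mathbb{C}^{d_E}$, and $q(\cdot\mid l,k)$ is a probability distribution on $\{1,\dots,m\}$ for each $(l,k)$. *)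

theory Defs
  imports Complex_Main "Jordan_Normal_Form.Schur_Decomposition"
begin

(* Conventions: indices are 0-based (row i in {0..<n}, outcome j in {0..<m});
   C^d is carrier_vec d; operators on C^d are complex d x d matrices.
   The tensor product C^dB (x) C^dE is identified with C^(dB*dE) via
   |b> (x) |e>  <->  basis index b*dE + e  (first factor = receiver B). *)

definition mtrace :: "complex mat \<Rightarrow> complex" where
  "mtrace A = (\<Sum>i<dim_row A. A $$ (i, i))"

definition kron :: "complex mat \<Rightarrow> complex mat \<Rightarrow> complex mat" where
  "kron A B = mat (dim_row A * dim_row B) (dim_col A * dim_col B)
     (\<lambda>(i, j). A $$ (i div dim_row B, j div dim_col B) * B $$ (i mod dim_row B, j mod dim_col B))"

definition psd :: "nat \<Rightarrow> complex mat \<Rightarrow> bool" where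
  "psd d A \<longleftrightarrow> A \<in> carrier_mat d d \<and>
     (\<forall>v \<in> carrier_vec d. Im ((A *\<^sub>v v) \<bullet>c v) = 0 \<and> 0 \<le> Re ((A *\<^sub>v v) \<bullet>c v))"

definition density :: "nat \<Rightarrow> complex mat \<Rightarrow> bool" where
  "density d \<rho> \<longleftrightarrow> psd d \<rho> \<and> mtrace \<rho> = 1"

definition povm :: "nat \<Rightarrow> nat \<Rightarrow> (nat \<Rightarrow> complex mat) \<Rightarrow> bool" where
  "povm d m Lam \<longleftrightarrow> (\<forall>j<m. psd d (Lam j)) \<and>
     (\<forall>a<d. \<forall>b<d. (\<Sum>j<m. Lam j $$ (a, b)) = (if a = b then 1 else 0))"

definition P_Q :: "nat \<Rightarrow> nat \<Rightarrow> nat \<Rightarrow> real mat set" where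
  "P_Q n m d = {P. P \<in> carrier_mat n m \<and>
     (\<exists>\<rho> Lam. (\<forall>i<n. density d (\<rho> i)) \<and> povm d m Lam \<and>
        (\<forall>i<n. \<forall>j<m. complex_of_real (P $$ (i, j)) = mtrace (Lam j * \<rho> i)))}"

definition isometry :: "nat \<Rightarrow> nat \<Rightarrow> complex mat \<Rightarrow> bool" where
  "isometry dA dOut V \<longleftrightarrow> V \<in> carrier_mat dOut dA \<and> mat_adjoint V * V = 1\<^sub>m dA"

definition ptrace_E :: "nat \<Rightarrow> nat \<Rightarrow> complex mat \<Rightarrow> complex mat" where
  "ptrace_E dB dE X = mat dB dB (\<lambda>(a, b). \<Sum>k<dE. X $$ (a * dE + k, b * dE + k))"

definition channel :: "nat \<Rightarrow> nat \<Rightarrow> complex mat \<Rightarrow> complex mat \<Rightarrow> complex mat" where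
  "channel dB dE V \<rho> = ptrace_E dB dE (V * \<rho> * mat_adjoint V)"

(* P^{n->m}_min(N, V) for N = channel dB dE V, V : C^dA -> C^dB (x) C^dE *)
definition P_min :: "nat \<Rightarrow> nat \<Rightarrow> nat \<Rightarrow> nat \<Rightarrow> nat \<Rightarrow> complex mat \<Rightarrow> real mat set" where
  "P_min n m dA dB dE V = {P. P \<in> carrier_mat n m \<and>
     (\<exists>\<rho> L K LamB LamE (q :: nat \<Rightarrow> nat \<Rightarrow> nat \<Rightarrow> real).
        (\<forall>i<n. density dA (\<rho> i)) \<and> povm dB L LamB \<and> povm dE K LamE \<and>
        (\<forall>l<L. \<forall>k<K. (\<forall>j<m. 0 \<le> q j l k) \<and> (\<Sum>j<m. q j l k) = 1) \<and>
        (\<forall>i<n. \<forall>j<m. complex_of_real (P $$ (i, j)) =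
           (\<Sum>l<L. \<Sum>k<K. complex_of_real (q j l k) *
              mtrace (kron (LamB l) (LamE k) * V * \<rho> i * mat_adjoint V))))}"

definition M7 :: "real \<Rightarrow> real mat" where
  "M7 p = mat 7 7 (\<lambda>(i, j).
     if i < 5 then (if i = j then 1 else 0)
     else if i = 5 then (if j = 5 then p else if j = 6 then 1 - p else 0)
     else (if j = 5 then p / 3 else if j = 6 then 1 - p / 3 else 0))"

definition phi3plus :: "complex vec" where
  "phi3plus = vec 9 (\<lambda>i. if i div 3 = i mod 3 then complex_of_real (1 / sqrt 3) else 0)"

definition ket01 :: "complex vec" where
  "ket01 = unit_vec 9 (0 * 3 + 1)"

end

theory Submission
  imports Defs
begin

(* Achievability: the range of V contains the unit vectors |10>, |02>, |12>, |20>, |21>,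
   (|00> - |11>)/sqrt 2 and (|00> + |11> - 2|22>)/sqrt 6, all orthogonal to phi_3^+ and |01>.
   Encoding the seven inputs by their preimages, measuring both B and E in the computational
   basis and relabelling the nine joint outcomes classically produces exactly the rows of M_7(p).
   Impossibility: for positive semidefinite A, B one has |Tr(AB)| <= Tr A Tr B, so every entry in
   column j of a matrix in P(Q_d) is at most Tr Lam_j, and these traces add up to d.  Summing the
   diagonal of M_7(p) gives 6 + 2p/3 <= d, which fails for p > 0 and d <= 6. *)

section \<open>Positive semidefinite matrices\<close>

lemma cscalar_prod_mult_mat_vec_sum:
  assumes "A \<in> carrier_mat d d" "v \<in> carrier_vec d"
  shows "(A *\<^sub>v v) \<bullet>c v = (\<Sum>i<d. \<Sum>j<d. A $$ (i, j) * v $ j * cnj (v $ i))"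
  using assms by (auto simp: scalar_prod_def sum_distrib_right lessThan_atLeast0 row_def intro!: sum.cong)

lemma cscalar_prod_mult_mat_vec_support:
  assumes A: "A \<in> carrier_mat d d" and v: "v \<in> carrier_vec d" and S: "S \<subseteq> {..<d}"
    and supp: "\<And>k. k < d \<Longrightarrow> k \<notin> S \<Longrightarrow> v $ k = 0"
  shows "(A *\<^sub>v v) \<bullet>c v = (\<Sum>i\<in>S. \<Sum>j\<in>S. A $$ (i, j) * v $ j * cnj (v $ i))"
proof -
  have "(\<Sum>j<d. A $$ (i, j) * v $ j * cnj (v $ i)) = (\<Sum>j\<in>S. A $$ (i, j) * v $ j * cnj (v $ i))" for i
    by (rule sum.mono_neutral_right) (use S supp in auto)
  then have "(A *\<^sub>v v) \<bullet>c v = (\<Sum>i<d. \<Sum>j\<in>S. A $$ (i, j) * v $ j * cnj (v $ i))"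
    by (simp add: cscalar_prod_mult_mat_vec_sum[OF A v])
  also have "\<dots> = (\<Sum>i\<in>S. \<Sum>j\<in>S. A $$ (i, j) * v $ j * cnj (v $ i))"
    by (rule sum.mono_neutral_right) (use S supp in \<open>auto simp: sum_distrib_right[symmetric]\<close>)
  finally show ?thesis .
qed

lemma psd_carrier_mat: "psd d A \<Longrightarrow> A \<in> carrier_mat d d"
  by (simp add: psd_def)

lemma psd_quadratic_form:
  assumes "psd d A" "v \<in> carrier_vec d"
  shows "Im ((A *\<^sub>v v) \<bullet>c v) = 0" "0 \<le> Re ((A *\<^sub>v v) \<bullet>c v)"
  using assms by (simp_all add: psd_def)

lemma psd_diag:
  assumes A: "psd d A" and a: "a < d"
  shows "Im (A $$ (a, a)) = 0" "0 \<le> Re (A $$ (a, a))"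
proof -
  have "(A *\<^sub>v unit_vec d a) \<bullet>c unit_vec d a = A $$ (a, a)"
    using a by (subst cscalar_prod_mult_mat_vec_support[OF psd_carrier_mat[OF A] _ _, where S = "{a}"])
      simp_all
  then show "Im (A $$ (a, a)) = 0" "0 \<le> Re (A $$ (a, a))"
    using psd_quadratic_form[OF A unit_vec_carrier[of d a]] by simp_all
qed

lemma cscalar_prod_mult_mat_vec_two_point:
  fixes \<alpha> \<beta> :: complex
  assumes A: "A \<in> carrier_mat d d" and ab: "a < d" "b < d" "a \<noteq> b"
  defines "v \<equiv> vec d (\<lambda>k. if k = a then \<alpha> else if k = b then \<beta> else 0)"
  shows "(A *\<^sub>v v) \<bullet>c v = A $$ (a, a) * \<alpha> * cnj \<alpha> + A $$ (a, b) * \<beta> * cnj \<alpha>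
      + A $$ (b, a) * \<alpha> * cnj \<beta> + A $$ (b, b) * \<beta> * cnj \<beta>"
  unfolding v_def using ab
  by (subst cscalar_prod_mult_mat_vec_support[OF A _ _, where S = "{a, b}"]) simp_all

lemma psd_two_point_form:
  fixes \<alpha> \<beta> :: complex
  assumes A: "psd d A" and ab: "a < d" "b < d" "a \<noteq> b"
  shows "Im (A $$ (a, a) * \<alpha> * cnj \<alpha> + A $$ (a, b) * \<beta> * cnj \<alpha>
      + A $$ (b, a) * \<alpha> * cnj \<beta> + A $$ (b, b) * \<beta> * cnj \<beta>) = 0"
    and "0 \<le> Re (A $$ (a, a) * \<alpha> * cnj \<alpha> + A $$ (a, b) * \<beta> * cnj \<alpha>
      + A $$ (b, a) * \<alpha> * cnj \<beta> + A $$ (b, b) * \<beta> * cnj \<beta>)"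
  using psd_quadratic_form[OF A, of "vec d (\<lambda>k. if k = a then \<alpha> else if k = b then \<beta> else 0)"]
  unfolding cscalar_prod_mult_mat_vec_two_point[OF psd_carrier_mat[OF A] ab] by simp_all

lemma psd_hermitian:
  assumes A: "psd d A" and ab: "a < d" "b < d"
  shows "A $$ (b, a) = cnj (A $$ (a, b))"
proof (cases "a = b")
  case True
  then show ?thesis using psd_diag[OF A ab(1)] by (simp add: complex_eq_iff)
next
  case False
  note diag = psd_diag(1)[OF A ab(1)] psd_diag(1)[OF A ab(2)]
  have "Im (A $$ (a, b)) + Im (A $$ (b, a)) = 0"
    using psd_two_point_form(1)[OF A ab False, of 1 1] diag by simp
  moreover have "Re (A $$ (a, b)) - Re (A $$ (b, a)) = 0"
    using psd_two_point_form(1)[OF A ab False, of 1 \<i>] diag by simp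
  ultimately have "Re (A $$ (b, a)) = Re (A $$ (a, b))" "Im (A $$ (b, a)) = - Im (A $$ (a, b))"
    by linarith+
  then show ?thesis by (simp add: complex_eq_iff)
qed

lemma quadratic_nonneg_imp_le:
  fixes x y c :: real
  assumes nonneg: "\<And>s. 0 \<le> x * s\<^sup>2 - 2 * s * c + y * c" and "0 \<le> c" "0 \<le> x" "0 \<le> y"
  shows "c \<le> x * y"
proof (cases "x = 0")
  case True
  have "0 \<le> x * (y + 1)\<^sup>2 - 2 * (y + 1) * c + y * c" by (rule nonneg)
  also have "\<dots> = - ((y + 2) * c)" using True by (simp add: algebra_simps)
  finally have "(y + 2) * c \<le> 0" by simp
  moreover have "0 \<le> (y + 2) * c" using assms by simp
  ultimately have "c = 0" using assms by (simp add: mult_le_0_iff)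
  then show ?thesis using assms by simp
next
  case False
  then have "x > 0" using assms by simp
  have "0 \<le> x * (c / x)\<^sup>2 - 2 * (c / x) * c + y * c" by (rule nonneg)
  also have "\<dots> = (c / x) * (x * y - c)"
    using \<open>x > 0\<close> by (simp add: power2_eq_square field_simps)
  finally have product_nonneg: "0 \<le> (c / x) * (x * y - c)" .
  show ?thesis
  proof (cases "c = 0")
    case False
    then have "c / x > 0" using \<open>x > 0\<close> \<open>0 \<le> c\<close> by simp
    have "\<not> x * y - c < 0"
    proof
      assume "x * y - c < 0"
      then have "(c / x) * (x * y - c) < 0" by (rule mult_pos_neg[OF \<open>c / x > 0\<close>])
      with product_nonneg show False by linarith
    qed
    then show ?thesis by linarith
  qed (use \<open>x > 0\<close> assms in simp)
qed

lemma psd_entry_norm_le: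
  assumes A: "psd d A" and ab: "a < d" "b < d"
  shows "(cmod (A $$ (a, b)))\<^sup>2 \<le> Re (A $$ (a, a)) * Re (A $$ (b, b))"
proof (cases "a = b")
  case True
  then show ?thesis using psd_diag[OF A ab(1)] by (simp add: cmod_def power2_eq_square)
next
  case False
  define z where "z = A $$ (a, b)"
  define c where "c = (cmod z)\<^sup>2"
  have zz: "z * cnj z = of_real c" unfolding c_def by (rule complex_norm_square[symmetric])
  have herm: "A $$ (b, a) = cnj z" unfolding z_def by (rule psd_hermitian[OF A ab])
  note diag = psd_diag[OF A ab(1)] psd_diag[OF A ab(2)]
  \<comment> \<open>the form at \<open>(s, - cnj z)\<close> is \<open>x s\<^sup>2 - 2 s \<bar>z\<bar>\<^sup>2 + y \<bar>z\<bar>\<^sup>2\<close> with \<open>x, y\<close> the diagonal entries\<close>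
  have "0 \<le> Re (A $$ (a, a)) * s\<^sup>2 - 2 * s * c + Re (A $$ (b, b)) * c" for s :: real
  proof -
    have "A $$ (a, a) * of_real s * cnj (of_real s) + A $$ (a, b) * (- cnj z) * cnj (of_real s)
        + A $$ (b, a) * of_real s * cnj (- cnj z) + A $$ (b, b) * (- cnj z) * cnj (- cnj z)
      = A $$ (a, a) * of_real (s\<^sup>2) - 2 * of_real s * (z * cnj z) + A $$ (b, b) * (z * cnj z)"
      unfolding herm z_def[symmetric] complex_cnj_complex_of_real complex_cnj_minus complex_cnj_cnj
        of_real_power power2_eq_square of_real_mult by (simp add: algebra_simps)
    then show ?thesis
      using psd_two_point_form(2)[OF A ab False, of "of_real s" "- cnj z"] diag unfolding zz by simp
  qed
  then have "c \<le> Re (A $$ (a, a)) * Re (A $$ (b, b))"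
    by (rule quadratic_nonneg_imp_le) (use diag c_def in auto)
  then show ?thesis unfolding c_def z_def .
qed

lemma mult_le_mean_of_products:
  fixes \<alpha> \<beta> xa xb ya yb :: real
  assumes "0 \<le> \<alpha>" "0 \<le> \<beta>" "\<alpha>\<^sup>2 \<le> xa * xb" "\<beta>\<^sup>2 \<le> yb * ya"
    "0 \<le> xa" "0 \<le> xb" "0 \<le> ya" "0 \<le> yb"
  shows "\<alpha> * \<beta> \<le> (xa * yb + xb * ya) / 2"
proof -
  have "(\<alpha> * \<beta>)\<^sup>2 = \<alpha>\<^sup>2 * \<beta>\<^sup>2" by (simp add: power_mult_distrib)
  also have "\<dots> \<le> (xa * xb) * (yb * ya)"
    using assms by (intro mult_mono) auto
  also have "\<dots> = (xa * yb) * (xb * ya)" by simp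
  also have "\<dots> \<le> ((xa * yb + xb * ya) / 2)\<^sup>2"
    using sum_squares_ge_zero[of "xa * yb - xb * ya" 0] by (simp add: power2_eq_square field_simps)
  finally show ?thesis
    by (rule power2_le_imp_le) (use assms in simp)
qed

lemma mtrace_mult:
  assumes "A \<in> carrier_mat d d" "B \<in> carrier_mat d d"
  shows "mtrace (A * B) = (\<Sum>a<d. \<Sum>b<d. A $$ (a, b) * B $$ (b, a))"
  using assms by (auto simp: mtrace_def scalar_prod_def lessThan_atLeast0 intro!: sum.cong)

lemma cmod_mtrace_mult_psd_le:
  assumes A: "psd d A" and B: "psd d B"
  shows "cmod (mtrace (A * B)) \<le> Re (mtrace A) * Re (mtrace B)"
proof -
  define x where "x a = Re (A $$ (a, a))" for a
  define y where "y a = Re (B $$ (a, a))" for a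
  have "cmod (mtrace (A * B)) \<le> (\<Sum>a<d. \<Sum>b<d. cmod (A $$ (a, b)) * cmod (B $$ (b, a)))"
    unfolding mtrace_mult[OF psd_carrier_mat[OF A] psd_carrier_mat[OF B]]
    by (rule order_trans[OF norm_sum sum_mono], rule order_trans[OF norm_sum]) (simp add: norm_mult)
  also have "\<dots> \<le> (\<Sum>a<d. \<Sum>b<d. (x a * y b + x b * y a) / 2)"
  proof (intro sum_mono)
    fix a b assume "a \<in> {..<d}" "b \<in> {..<d}"
    then show "cmod (A $$ (a, b)) * cmod (B $$ (b, a)) \<le> (x a * y b + x b * y a) / 2"
      using psd_entry_norm_le[OF A, of a b] psd_entry_norm_le[OF B, of b a]
        psd_diag[OF A, of a] psd_diag[OF A, of b] psd_diag[OF B, of a] psd_diag[OF B, of b]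
      unfolding x_def y_def by (intro mult_le_mean_of_products) auto
  qed
  also have "\<dots> = ((\<Sum>a<d. \<Sum>b<d. x a * y b) + (\<Sum>a<d. \<Sum>b<d. x b * y a)) / 2"
    by (simp add: sum.distrib add_divide_distrib sum_divide_distrib)
  also have "\<dots> = (\<Sum>a<d. x a) * (\<Sum>b<d. y b)"
    unfolding sum.swap[of "\<lambda>a b. x b * y a"] by (simp add: sum_product)
  also have "\<dots> = Re (mtrace A) * Re (mtrace B)"
    using psd_carrier_mat[OF A] psd_carrier_mat[OF B] by (simp add: mtrace_def x_def y_def Re_sum)
  finally show ?thesis .
qed

section \<open>Column bound for prepare-and-measure matrices\<close>

lemma P_Q_sum_selected_entries_le:
  assumes P: "P \<in> P_Q n m d" and r: "\<And>j. j < m \<Longrightarrow> r j < n"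
  shows "(\<Sum>j<m. P $$ (r j, j)) \<le> d"
proof -
  obtain \<rho> Lam where \<rho>: "\<And>i. i < n \<Longrightarrow> density d (\<rho> i)" and Lam: "povm d m Lam"
    and P_eq: "\<And>i j. i < n \<Longrightarrow> j < m \<Longrightarrow> complex_of_real (P $$ (i, j)) = mtrace (Lam j * \<rho> i)"
    using P unfolding P_Q_def by blast
  have "P $$ (r j, j) \<le> Re (mtrace (Lam j))" if j: "j < m" for j
  proof -
    have "P $$ (r j, j) \<le> cmod (mtrace (Lam j * \<rho> (r j)))"
      using P_eq[OF r[OF j] j] by (metis Re_complex_of_real complex_Re_le_cmod)
    also have "\<dots> \<le> Re (mtrace (Lam j)) * Re (mtrace (\<rho> (r j)))"
      using Lam \<rho>[OF r[OF j]] j unfolding povm_def density_def by (intro cmod_mtrace_mult_psd_le) auto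
    finally show ?thesis using \<rho>[OF r[OF j]] unfolding density_def by simp
  qed
  then have "(\<Sum>j<m. P $$ (r j, j)) \<le> (\<Sum>j<m. Re (mtrace (Lam j)))"
    by (intro sum_mono) simp
  also have "\<dots> = (\<Sum>j<m. \<Sum>a<d. Re (Lam j $$ (a, a)))"
  proof (intro sum.cong refl)
    fix j assume "j \<in> {..<m}"
    then have "Lam j \<in> carrier_mat d d" using Lam by (simp add: povm_def psd_def)
    then show "Re (mtrace (Lam j)) = (\<Sum>a<d. Re (Lam j $$ (a, a)))" by (simp add: mtrace_def Re_sum)
  qed
  also have "\<dots> = (\<Sum>a<d. Re (\<Sum>j<m. Lam j $$ (a, a)))"
    unfolding Re_sum by (rule sum.swap)
  also have "\<dots> = d"
    using Lam unfolding povm_def by simp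
  finally show ?thesis .
qed

lemma M7_diag: "j < 7 \<Longrightarrow> M7 p $$ (j, j) = (if j < 5 then 1 else if j = 5 then p else 1 - p / 3)"
  by (simp add: M7_def)

lemma M7_notin_P_Q:
  assumes "0 < p" "d \<le> 6"
  shows "M7 p \<notin> P_Q 7 7 d"
proof
  assume "M7 p \<in> P_Q 7 7 d"
  then have "(\<Sum>j<7. M7 p $$ (j, j)) \<le> d"
    by (rule P_Q_sum_selected_entries_le)
  moreover have "(\<Sum>j<7. M7 p $$ (j, j)) = 6 + 2 * p / 3"
    by (simp add: M7_diag lessThan_nat_numeral)
  ultimately show False using assms by linarith
qed

section \<open>Pure states and computational-basis measurements\<close>

lemma mat_adjoint_eq:
  "A \<in> carrier_mat n m \<Longrightarrow> mat_adjoint A = mat m n (\<lambda>(i, j). cnj (A $$ (j, i)))"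
  by (auto simp: mat_adjoint_def mat_of_rows_def intro!: eq_matI)

lemma mat_adjoint_carrier_mat:
  "(A :: complex mat) \<in> carrier_mat n m \<Longrightarrow> mat_adjoint A \<in> carrier_mat m n"
  by (simp add: mat_adjoint_eq)

lemma cscalar_prod_mat_adjoint:
  fixes A :: "complex mat"
  assumes A: "A \<in> carrier_mat n m" and u: "u \<in> carrier_vec m" and w: "w \<in> carrier_vec n"
  shows "(A *\<^sub>v u) \<bullet>c w = u \<bullet>c (mat_adjoint A *\<^sub>v w)"
proof -
  have "(A *\<^sub>v u) \<bullet>c w = (\<Sum>i<n. (\<Sum>j<m. A $$ (i, j) * u $ j) * cnj (w $ i))"
    using A u w by (auto simp: scalar_prod_def lessThan_atLeast0 intro!: sum.cong)
  also have "\<dots> = (\<Sum>i<n. \<Sum>j<m. u $ j * (A $$ (i, j) * cnj (w $ i)))"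
    by (simp add: sum_distrib_left sum_distrib_right mult_ac)
  also have "\<dots> = (\<Sum>j<m. \<Sum>i<n. u $ j * (A $$ (i, j) * cnj (w $ i)))"
    by (rule sum.swap)
  also have "\<dots> = (\<Sum>j<m. u $ j * cnj (\<Sum>i<n. cnj (A $$ (i, j)) * w $ i))"
    by (simp add: sum_distrib_left)
  also have "\<dots> = u \<bullet>c (mat_adjoint A *\<^sub>v w)"
    using A u w by (auto simp: mat_adjoint_eq[OF A] scalar_prod_def lessThan_atLeast0 intro!: sum.cong)
  finally show ?thesis .
qed

lemma isometry_cscalar_prod:
  assumes V: "isometry dA dOut V" and x: "x \<in> carrier_vec dA"
  shows "(V *\<^sub>v x) \<bullet>c (V *\<^sub>v x) = x \<bullet>c x"
proof -
  have Vc: "V \<in> carrier_mat dOut dA" and VV: "mat_adjoint V * V = 1\<^sub>m dA"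
    using V unfolding isometry_def by auto
  have "(V *\<^sub>v x) \<bullet>c (V *\<^sub>v x) = x \<bullet>c (mat_adjoint V *\<^sub>v (V *\<^sub>v x))"
    using Vc x by (intro cscalar_prod_mat_adjoint) auto
  also have "mat_adjoint V *\<^sub>v (V *\<^sub>v x) = (mat_adjoint V * V) *\<^sub>v x"
    using assoc_mult_mat_vec[OF mat_adjoint_carrier_mat[OF Vc] Vc x] by simp
  finally show ?thesis using x by (simp add: VV)
qed

definition outer :: "complex vec \<Rightarrow> complex mat" where
  "outer x = mat (dim_vec x) (dim_vec x) (\<lambda>(a, b). x $ a * cnj (x $ b))"

lemma outer_carrier_mat: "x \<in> carrier_vec d \<Longrightarrow> outer x \<in> carrier_mat d d"
  by (simp add: outer_def)

lemma psd_outer: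
  assumes x: "x \<in> carrier_vec d"
  shows "psd d (outer x)"
  unfolding psd_def
proof (intro conjI ballI)
  show "outer x \<in> carrier_mat d d" using x by (rule outer_carrier_mat)
  fix v :: "complex vec" assume v: "v \<in> carrier_vec d"
  define s where "s = (\<Sum>i<d. x $ i * cnj (v $ i))"
  have "(outer x *\<^sub>v v) \<bullet>c v = (\<Sum>i<d. \<Sum>j<d. (x $ i * cnj (v $ i)) * (cnj (x $ j) * v $ j))"
    using cscalar_prod_mult_mat_vec_sum[OF outer_carrier_mat[OF x] v] x
    by (simp add: outer_def algebra_simps)
  also have "\<dots> = s * cnj s" unfolding s_def by (simp add: sum_product)
  also have "\<dots> = of_real ((cmod s)\<^sup>2)" by (rule complex_norm_square[symmetric])
  finally have "(outer x *\<^sub>v v) \<bullet>c v = of_real ((cmod s)\<^sup>2)" .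
  then show "Im ((outer x *\<^sub>v v) \<bullet>c v) = 0" "0 \<le> Re ((outer x *\<^sub>v v) \<bullet>c v)"
    by simp_all
qed

lemma mtrace_outer: "mtrace (outer x) = x \<bullet>c x"
  by (simp add: mtrace_def outer_def scalar_prod_def lessThan_atLeast0)

lemma density_outer:
  "x \<in> carrier_vec d \<Longrightarrow> x \<bullet>c x = 1 \<Longrightarrow> density d (outer x)"
  by (simp add: density_def psd_outer mtrace_outer)

lemma mult_outer_mult_mat_adjoint:
  assumes A: "A \<in> carrier_mat n m" and x: "x \<in> carrier_vec m"
  shows "A * outer x * mat_adjoint A = outer (A *\<^sub>v x)"
proof (rule eq_matI)
  fix i j assume "i < dim_row (outer (A *\<^sub>v x))" "j < dim_col (outer (A *\<^sub>v x))"
  then have i: "i < n" and j: "j < n" using A by (auto simp: outer_def)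
  have "(A * outer x * mat_adjoint A) $$ (i, j)
      = (\<Sum>b<m. (\<Sum>a<m. A $$ (i, a) * (x $ a * cnj (x $ b))) * cnj (A $$ (j, b)))"
    using A x i j by (auto simp: mat_adjoint_eq[OF A] outer_def scalar_prod_def lessThan_atLeast0
        intro!: sum.cong)
  also have "\<dots> = (\<Sum>b<m. \<Sum>a<m. (A $$ (i, a) * x $ a) * (cnj (A $$ (j, b)) * cnj (x $ b)))"
    by (simp add: sum_distrib_left sum_distrib_right mult_ac)
  also have "\<dots> = (\<Sum>a<m. \<Sum>b<m. (A $$ (i, a) * x $ a) * (cnj (A $$ (j, b)) * cnj (x $ b)))"
    by (rule sum.swap)
  also have "\<dots> = (\<Sum>a<m. A $$ (i, a) * x $ a) * cnj (\<Sum>b<m. A $$ (j, b) * x $ b)"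
    by (simp add: sum_product cnj_sum)
  also have "\<dots> = outer (A *\<^sub>v x) $$ (i, j)"
    using A x i j by (auto simp: outer_def scalar_prod_def lessThan_atLeast0 intro!: sum.cong)
  finally show "(A * outer x * mat_adjoint A) $$ (i, j) = outer (A *\<^sub>v x) $$ (i, j)" .
qed (use A in \<open>auto simp: outer_def mat_adjoint_eq[OF A]\<close>)

definition basis_proj :: "nat \<Rightarrow> nat \<Rightarrow> complex mat" where
  "basis_proj n k = mat n n (\<lambda>(i, j). of_bool (i = k \<and> j = k))"

lemma basis_proj_eq_outer: "basis_proj n k = outer (unit_vec n k)"
  by (auto simp: basis_proj_def outer_def unit_vec_def intro!: eq_matI)

lemma povm_basis_proj: "povm d d (basis_proj d)"
  unfolding povm_def
proof (intro conjI allI impI)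
  show "psd d (basis_proj d j)" for j
    unfolding basis_proj_eq_outer by (rule psd_outer) simp
  show "(\<Sum>j<d. basis_proj d j $$ (a, b)) = (if a = b then 1 else 0)" if "a < d" "b < d" for a b
    using that by (simp add: basis_proj_def of_bool_def)
qed

lemma mtrace_basis_proj_mult:
  assumes "k < n" "B \<in> carrier_mat n n"
  shows "mtrace (basis_proj n k * B) = B $$ (k, k)"
proof -
  have "mtrace (basis_proj n k * B) = (\<Sum>a<n. \<Sum>b<n. of_bool (a = k \<and> b = k) * B $$ (b, a))"
    using assms by (simp add: mtrace_mult[of _ n] basis_proj_def)
  also have "\<dots> = (\<Sum>a<n. \<Sum>b<n. if b = k then (if a = k then B $$ (k, k) else 0) else 0)"
    by (intro sum.cong refl) auto
  also have "\<dots> = B $$ (k, k)"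
    using assms by (simp add: sum.delta)
  finally show ?thesis .
qed

lemma kron_basis_proj:
  assumes "l < dB" "k < dE"
  shows "kron (basis_proj dB l) (basis_proj dE k) = basis_proj (dB * dE) (l * dE + k)"
proof (rule eq_matI)
  have index: "i div dE = l \<and> i mod dE = k \<longleftrightarrow> i = l * dE + k" for i
    using assms(2) by auto
  fix i j assume "i < dim_row (basis_proj (dB * dE) (l * dE + k))"
    "j < dim_col (basis_proj (dB * dE) (l * dE + k))"
  then show "kron (basis_proj dB l) (basis_proj dE k) $$ (i, j) = basis_proj (dB * dE) (l * dE + k) $$ (i, j)"
    using index[of i] index[of j] assms
    by (auto simp: kron_def basis_proj_def less_mult_imp_div_less)
qed (auto simp: kron_def basis_proj_def)

lemma P_min_of_basis_measurement:
  assumes V: "isometry dA (dB * dE) V"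
    and x: "\<And>i. i < n \<Longrightarrow> x i \<in> carrier_vec dA \<and> x i \<bullet>c x i = 1"
    and q: "\<And>l k. l < dB \<Longrightarrow> k < dE \<Longrightarrow> (\<forall>j<m. 0 \<le> q j l k) \<and> (\<Sum>j<m. q j l k) = 1"
    and P: "P \<in> carrier_mat n m"
    and P_eq: "\<And>i j. i < n \<Longrightarrow> j < m \<Longrightarrow>
      P $$ (i, j) = (\<Sum>l<dB. \<Sum>k<dE. q j l k * (cmod ((V *\<^sub>v x i) $ (l * dE + k)))\<^sup>2)"
  shows "P \<in> P_min n m dA dB dE V"
proof -
  have Vc: "V \<in> carrier_mat (dB * dE) dA" and Va: "mat_adjoint V \<in> carrier_mat dA (dB * dE)"
    using V by (auto simp: isometry_def mat_adjoint_carrier_mat)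
  have outcome_prob: "mtrace (kron (basis_proj dB l) (basis_proj dE k) * V * outer (x i) * mat_adjoint V)
      = of_real ((cmod ((V *\<^sub>v x i) $ (l * dE + k)))\<^sup>2)"
    if i: "i < n" and l: "l < dB" and k: "k < dE" for i l k
  proof -
    define E where "E = basis_proj (dB * dE) (l * dE + k)"
    have xi: "x i \<in> carrier_vec dA" using x[OF i] by blast
    have "l * dE + k < (l + 1) * dE" using k by simp
    also have "\<dots> \<le> dB * dE" using l by (intro mult_right_mono) auto
    finally have lk: "l * dE + k < dB * dE" .
    have Ec: "E \<in> carrier_mat (dB * dE) (dB * dE)" by (simp add: E_def basis_proj_def)
    have \<rho>c: "outer (x i) \<in> carrier_mat dA dA" by (rule outer_carrier_mat[OF xi])
    have Vx: "V *\<^sub>v x i \<in> carrier_vec (dB * dE)" using Vc xi by simp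
    have "kron (basis_proj dB l) (basis_proj dE k) * V * outer (x i) * mat_adjoint V
        = E * (V * outer (x i) * mat_adjoint V)"
      unfolding kron_basis_proj[OF l k] E_def[symmetric]
      using assoc_mult_mat[OF Ec Vc \<rho>c] assoc_mult_mat[OF Ec mult_carrier_mat[OF Vc \<rho>c] Va] by simp
    also have "V * outer (x i) * mat_adjoint V = outer (V *\<^sub>v x i)"
      by (rule mult_outer_mult_mat_adjoint[OF Vc xi])
    finally have "mtrace (kron (basis_proj dB l) (basis_proj dE k) * V * outer (x i) * mat_adjoint V)
        = outer (V *\<^sub>v x i) $$ (l * dE + k, l * dE + k)"
      using mtrace_basis_proj_mult[OF lk outer_carrier_mat[OF Vx]] by (simp add: E_def)
    also have "\<dots> = (V *\<^sub>v x i) $ (l * dE + k) * cnj ((V *\<^sub>v x i) $ (l * dE + k))"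
      using lk Vc by (simp add: outer_def)
    also have "\<dots> = of_real ((cmod ((V *\<^sub>v x i) $ (l * dE + k)))\<^sup>2)"
      by (rule complex_norm_square[symmetric])
    finally show ?thesis .
  qed
  have "complex_of_real (P $$ (i, j)) = (\<Sum>l<dB. \<Sum>k<dE. complex_of_real (q j l k) *
      mtrace (kron (basis_proj dB l) (basis_proj dE k) * V * outer (x i) * mat_adjoint V))"
    if "i < n" "j < m" for i j
    using that by (simp add: P_eq outcome_prob)
  then show ?thesis
    unfolding P_min_def using P x q density_outer povm_basis_proj
    by (intro CollectI conjI exI[of _ "\<lambda>i. outer (x i)"] exI[of _ dB] exI[of _ dE]
        exI[of _ "basis_proj dB"] exI[of _ "basis_proj dE"] exI[of _ q]) auto
qed

section \<open>A minimal-assistance encoding of \<open>M7 p\<close>\<close>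

text \<open>Amplitudes of the seven encoded states in \<open>\<complex>\<^sup>3 \<otimes> \<complex>\<^sup>3\<close>, where index \<open>m = 3 b + e\<close>
  stands for \<open>|b\<rangle> \<otimes> |e\<rangle>\<close>: the product states \<open>|10\<rangle>, |02\<rangle>, |12\<rangle>, |20\<rangle>, |21\<rangle>\<close>, then
  \<open>(|00\<rangle> - |11\<rangle>)/\<surd>2\<close> and \<open>(|00\<rangle> + |11\<rangle> - 2|22\<rangle>)/\<surd>6\<close>.\<close>

definition amp :: "nat \<Rightarrow> nat \<Rightarrow> real" where
  "amp i m =
    (if i = 0 then of_bool (m = 3) else if i = 1 then of_bool (m = 2)
     else if i = 2 then of_bool (m = 5) else if i = 3 then of_bool (m = 6)
     else if i = 4 then of_bool (m = 7)
     else if i = 5 then (if m = 0 then sqrt (1 / 2) else if m = 4 then - sqrt (1 / 2) else 0)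
     else if m = 0 \<or> m = 4 then sqrt (1 / 6) else if m = 8 then - 2 * sqrt (1 / 6) else 0)"

definition psi :: "nat \<Rightarrow> complex vec" where
  "psi i = vec 9 (\<lambda>m. of_real (amp i m))"

lemma cscalar_prod_of_real_vec:
  "vec n (\<lambda>m. of_real (f m)) \<bullet>c vec n (\<lambda>m. of_real (g m)) = complex_of_real (\<Sum>m<n. f m * g m)"
  by (simp add: scalar_prod_def lessThan_atLeast0)

lemma less_7_cases: "(i :: nat) < 7 \<longleftrightarrow> i = 0 \<or> i = 1 \<or> i = 2 \<or> i = 3 \<or> i = 4 \<or> i = 5 \<or> i = 6"
  by auto

lemma sum_less_9:
  fixes f :: "nat \<Rightarrow> real"
  shows "(\<Sum>m<9. f m) = f 0 + f 1 + f 2 + f 3 + f 4 + f 5 + f 6 + f 7 + f 8"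
  by (simp add: eval_nat_numeral)

lemma psi_orthogonal:
  assumes i: "i < 7"
  shows "psi i \<bullet>c phi3plus = 0" "psi i \<bullet>c ket01 = 0"
proof -
  have phi_eq: "phi3plus = vec 9 (\<lambda>m. of_real (if m div 3 = m mod 3 then 1 / sqrt 3 else 0))"
    unfolding phi3plus_def by (intro eq_vecI) auto
  have "(\<Sum>m<9. amp i m * (if m div 3 = m mod 3 then 1 / sqrt 3 else 0)) = 0"
    using i unfolding sum_less_9 less_7_cases by (auto simp: amp_def)
  then show "psi i \<bullet>c phi3plus = 0"
    unfolding psi_def phi_eq cscalar_prod_of_real_vec by simp
  have ket_eq: "ket01 = vec 9 (\<lambda>m. of_real (of_bool (m = 1)))"
    unfolding ket01_def by (intro eq_vecI) auto
  have "(\<Sum>m<9. amp i m * of_bool (m = 1)) = 0"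
    using i unfolding sum_less_9 less_7_cases by (auto simp: amp_def)
  then show "psi i \<bullet>c ket01 = 0"
    unfolding psi_def ket_eq cscalar_prod_of_real_vec by simp
qed

lemma psi_unit:
  assumes i: "i < 7"
  shows "psi i \<bullet>c psi i = 1"
proof -
  have "(\<Sum>m<9. amp i m * amp i m) = 1"
    using i unfolding sum_less_9 less_7_cases by (auto simp: amp_def)
  then show ?thesis by (simp add: psi_def cscalar_prod_of_real_vec)
qed

text \<open>The classical post-processing \<open>q(j | m)\<close>: an outcome produced by only one of the first five
  states announces that state; \<open>|00\<rangle>\<close> and \<open>|11\<rangle>\<close>, which only the last two states produce, are
  announced as 5 or 6 with probabilities \<open>p\<close> and \<open>1 - p\<close>; \<open>|22\<rangle>\<close> is announced as 6.  The unused
  outcome \<open>|01\<rangle>\<close> falls into the default branch.\<close>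

definition relabel :: "real \<Rightarrow> nat \<Rightarrow> nat \<Rightarrow> real" where
  "relabel p j m =
    (if m = 0 \<or> m = 4 then (if j = 5 then p else if j = 6 then 1 - p else 0)
     else if m = 2 then of_bool (j = 1) else if m = 5 then of_bool (j = 2)
     else if m = 6 then of_bool (j = 3) else if m = 7 then of_bool (j = 4)
     else if m = 8 then of_bool (j = 6) else of_bool (j = 0))"

lemma relabel_nonneg: "0 \<le> p \<Longrightarrow> p \<le> 1 \<Longrightarrow> 0 \<le> relabel p j m"
  by (simp add: relabel_def)

lemma sum_less_3:
  fixes f :: "nat \<Rightarrow> 'a :: comm_monoid_add"
  shows "(\<Sum>l<3. f l) = f 0 + f 1 + f 2"
  by (simp add: eval_nat_numeral)

lemma sum_relabel: "(\<Sum>j<7. relabel p j m) = 1"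
  by (simp add: relabel_def eval_nat_numeral)

lemma M7_eq_relabelled_outcomes:
  assumes "i < 7" "j < 7"
  shows "M7 p $$ (i, j) = (\<Sum>l<3. \<Sum>k<3. relabel p j (l * 3 + k) * (amp i (l * 3 + k))\<^sup>2)"
  using assms unfolding sum_less_3 less_7_cases
  by (auto simp: M7_def relabel_def amp_def field_simps)

lemma M7_in_P_min:
  fixes V :: "complex mat"
  assumes iso: "isometry 7 9 V"
    and onto: "\<And>w. w \<in> carrier_vec 9 \<Longrightarrow> w \<bullet>c phi3plus = 0 \<Longrightarrow> w \<bullet>c ket01 = 0 \<Longrightarrow>
      \<exists>x \<in> carrier_vec 7. V *\<^sub>v x = w"
    and p: "0 \<le> p" "p \<le> 1"
  shows "M7 p \<in> P_min 7 7 7 3 3 V"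
proof -
  have "\<exists>x \<in> carrier_vec 7. V *\<^sub>v x = psi i" if "i < 7" for i
    using onto psi_orthogonal[OF that] by (simp add: psi_def)
  then obtain x where x: "\<And>i. i < 7 \<Longrightarrow> x i \<in> carrier_vec 7 \<and> V *\<^sub>v x i = psi i"
    by metis
  show ?thesis
  proof (rule P_min_of_basis_measurement[where x = x and q = "\<lambda>j l k. relabel p j (l * 3 + k)"])
    show "isometry 7 (3 * 3) V" using iso by simp
    show "x i \<in> carrier_vec 7 \<and> x i \<bullet>c x i = 1" if "i < 7" for i
      using x[OF that] isometry_cscalar_prod[OF iso] psi_unit[OF that] by metis
    show "(\<forall>j<7. 0 \<le> relabel p j (l * 3 + k)) \<and> (\<Sum>j<7. relabel p j (l * 3 + k)) = 1" for l k
      using p by (simp add: relabel_nonneg sum_relabel)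
    show "M7 p \<in> carrier_mat 7 7" by (simp add: M7_def)
    show "M7 p $$ (i, j) = (\<Sum>l<3. \<Sum>k<3. relabel p j (l * 3 + k) * (cmod ((V *\<^sub>v x i) $ (l * 3 + k)))\<^sup>2)"
      if "i < 7" "j < 7" for i j
      using that x by (simp add: M7_eq_relabelled_outcomes psi_def sum_less_3)
  qed
qed

theorem theorem1:
  fixes V :: "complex mat"
  assumes iso: "isometry 7 9 V"
    and range: "\<And>w. w \<in> carrier_vec 9 \<Longrightarrow>
        (w \<in> {V *\<^sub>v x | x. x \<in> carrier_vec 7} \<longleftrightarrow> w \<bullet>c phi3plus = 0 \<and> w \<bullet>c ket01 = 0)"
  shows "(\<forall>p::real. 0 \<le> p \<and> p \<le> 1 \<longrightarrow> M7 p \<in> P_min 7 7 7 3 3 V)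
    \<and> (\<forall>p::real. \<forall>d::nat. 0 < p \<and> p \<le> 1 \<and> d \<le> 6 \<longrightarrow> M7 p \<notin> P_Q 7 7 d)
    \<and> (\<forall>d::nat. d < 7 \<longrightarrow> \<not> P_min 7 7 7 3 3 V \<subseteq> P_Q 7 7 d)"
proof -
  have onto: "\<exists>x \<in> carrier_vec 7. V *\<^sub>v x = w"
    if "w \<in> carrier_vec 9" "w \<bullet>c phi3plus = 0" "w \<bullet>c ket01 = 0" for w
    using range[OF that(1)] that(2,3) by blast
  have achievable: "M7 p \<in> P_min 7 7 7 3 3 V" if "0 \<le> p" "p \<le> 1" for p
    using M7_in_P_min[OF iso onto that] .
  moreover have "\<not> P_min 7 7 7 3 3 V \<subseteq> P_Q 7 7 d" if "d < 7" for d
    using achievable[of 1] M7_notin_P_Q[of 1 d] that by auto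
  ultimately show ?thesis
    using M7_notin_P_Q by blast
qed

end
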